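(* Let $\mathcal{M}$ be the set of compactly supported probability distributions on $\mathbb{R}$ and let $\mathcal{U}=\{T^u: u \text{ a utility function}\}$. Let $T:\mathcal{M}\to\mathcal{M}$ be monotone. Then $\mathcal{U}\circ T=T\circ\mathcal{U}$ if and only if $T=T_d\circ T^u$ for some distortion function $d$ and some utility function $u$ that is strictly increasing and surjective ($u(\mathbb{R})=\mathbb{R}$).
   Context: Increasing means non-decreasing. A distortion function is an increasing function $d:[0,1]\to[0,1]$ with $d(0)=0$, $d(1)=1$. A utility function is an increasing continuous $u:\mathbb{R}\to\mathbb{R}$. $T_d(F)(x)=\lim_{y\downarrow x}d(F(y))$; $T^u(F)=F\circ u^{-1}$ is the distribution of $u(X)$ when $X\sim F$. For a set $\mathcal{T}$ of maps $\mathcal{M}\to\mathcal{M}$, $\mathcal{T}\circ T=\{T'\circ T:T'\in\mathcal{T}\}$ and $T\circ\mathcal{T}=\{T\circ T':T'\in\mathcal{T}\}$. For $F,G\in\mathcal{M}$, $F\le_{\rm st}G$ means $F(x)\ge G(x)$ for all $x$; $T$ is monotone if $F\le_{\rm st}G$ implies $T(F)\le_{\rm st}T(G)$. *)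

theory Defs
  imports Complex_Main
begin

text \<open>Distributions on the real line are represented by their distribution
functions F (right-continuous, increasing).\<close>

definition Mset :: "(real \<Rightarrow> real) set" where
  "Mset = {F. mono F \<and> (\<forall>x. continuous (at_right x) F) \<and>
              (\<exists>a b. \<forall>x. (x < a \<longrightarrow> F x = 0) \<and> (b \<le> x \<longrightarrow> F x = 1))}"

definition distortion :: "(real \<Rightarrow> real) \<Rightarrow> bool" where
  "distortion d \<longleftrightarrow> mono_on {0..1} d \<and> d ` {0..1} \<subseteq> {0..1} \<and> d 0 = 0 \<and> d 1 = 1"

definition utility :: "(real \<Rightarrow> real) \<Rightarrow> bool" where
  "utility u \<longleftrightarrow> mono u \<and> continuous_on UNIV u"

definition Td :: "(real \<Rightarrow> real) \<Rightarrow> (real \<Rightarrow> real) \<Rightarrow> (real \<Rightarrow> real)" where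
  "Td d F = (\<lambda>x. Lim (at_right x) (\<lambda>y. d (F y)))"

text \<open>T^u(F) = F o u^{-1}: the distribution function of u(X) for X ~ F, i.e.
y maps to P(u(X) \<le> y) = P(X \<in> {x. u x \<le> y}); for continuous increasing u the
set {x. u x \<le> y} is empty, all of the real line, or a ray ]-inf, s] with s its supremum.\<close>
definition Tu :: "(real \<Rightarrow> real) \<Rightarrow> (real \<Rightarrow> real) \<Rightarrow> (real \<Rightarrow> real)" where
  "Tu u F = (\<lambda>y. if {x. u x \<le> y} = {} then 0
                 else if bdd_above {x. u x \<le> y} then F (Sup {x. u x \<le> y})
                 else 1)"

definition st_le :: "(real \<Rightarrow> real) \<Rightarrow> (real \<Rightarrow> real) \<Rightarrow> bool" where
  "st_le F G \<longleftrightarrow> (\<forall>x. F x \<ge> G x)"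

definition monotone_op :: "((real \<Rightarrow> real) \<Rightarrow> (real \<Rightarrow> real)) \<Rightarrow> bool" where
  "monotone_op T \<longleftrightarrow> (\<forall>F\<in>Mset. \<forall>G\<in>Mset. st_le F G \<longrightarrow> st_le (T F) (T G))"

text \<open>U o T = T o U as sets of maps M -> M (maps compared on M).\<close>
definition commutes_with_U :: "((real \<Rightarrow> real) \<Rightarrow> (real \<Rightarrow> real)) \<Rightarrow> bool" where
  "commutes_with_U T \<longleftrightarrow>
     (\<forall>u. utility u \<longrightarrow> (\<exists>v. utility v \<and> (\<forall>F\<in>Mset. Tu u (T F) = T (Tu v F)))) \<and>
     (\<forall>v. utility v \<longrightarrow> (\<exists>u. utility u \<and> (\<forall>F\<in>Mset. T (Tu v F) = Tu u (T F))))"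

end

theory Submission
  imports Defs "HOL-Analysis.Analysis"
begin

(* Commuting with the constant utilities forces T to map point masses to point masses,
   delta_a to delta_(phi a), with phi increasing and onto; conjugating affine utilities
   through phi shows that phi is also injective, hence a strictly increasing bijection of
   the line. Then T' = T o T^(inv phi) fixes every point mass and commutes with every T^v.
   For the ramp utility v rising from 0 at x to 1 at y, T^v F lies stochastically between
   the laws on {0, 1} with mass F x resp. F y at 0, and T'(T^v F)(0) = T'F(x). Monotonicity
   of T' therefore squeezes T'F(x) between d(F x) and d(F y), where d p is the value at 0
   of T' applied to the law with mass p at 0, and right-continuity of T'F gives T' = T_d.
   Conversely, T_d commutes with every T^w because the right limits defining T_d commute
   with T^w, and T^u is absorbed by conjugating utilities with u. *)

lemma continuous_on_strict_mono_surj: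
  fixes f :: "real \<Rightarrow> real"
  assumes sm: "strict_mono f" and su: "surj f"
  shows "continuous_on UNIV f"
proof -
  have "isCont f x" for x
    unfolding isCont_def
  proof (rule order_tendstoI)
    fix a assume "a < f x"
    obtain z where z: "a = f z" using su by (metis surjD)
    have "eventually (\<lambda>y. z < y) (at x)"
      using \<open>a < f x\<close> z sm by (intro order_tendstoD(1)[OF tendsto_ident_at]) (metis strict_mono_less)
    then show "eventually (\<lambda>y. a < f y) (at x)"
      by eventually_elim (use z sm in \<open>simp add: strict_mono_less\<close>)
  next
    fix a assume "f x < a"
    obtain z where z: "a = f z" using su by (metis surjD)
    have "eventually (\<lambda>y. y < z) (at x)"
      using \<open>f x < a\<close> z sm by (intro order_tendstoD(2)[OF tendsto_ident_at]) (metis strict_mono_less)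
    then show "eventually (\<lambda>y. f y < a) (at x)"
      by eventually_elim (use z sm in \<open>simp add: strict_mono_less\<close>)
  qed
  then show ?thesis by (simp add: continuous_at_imp_continuous_on)
qed

lemma utility_strict_mono_surj:
  "strict_mono f \<Longrightarrow> surj f \<Longrightarrow> utility f"
  unfolding utility_def using continuous_on_strict_mono_surj strict_mono_mono by blast

lemma strict_mono_surj_inv:
  fixes f :: "real \<Rightarrow> real"
  assumes "strict_mono f" "surj f"
  shows "strict_mono (inv f)" "surj (inv f)"
proof -
  have "inj f" using assms(1) strict_mono_on_imp_inj_on by blast
  then show "strict_mono (inv f)" using strict_mono_inv[OF assms] by simp
  show "surj (inv f)" using \<open>inj f\<close> by (rule inj_imp_surj_inv)
qed

lemma utility_const: "utility (\<lambda>_. c)"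
  unfolding utility_def by (auto simp: mono_def)

lemma utility_ident: "utility (\<lambda>x. x)"
  unfolding utility_def by (auto simp: mono_def)

lemma utility_comp: "utility a \<Longrightarrow> utility b \<Longrightarrow> utility (a \<circ> b)"
  unfolding utility_def by (auto simp: mono_def intro: continuous_on_compose2[of UNIV a UNIV b])

lemma utility_affine:
  fixes k :: real
  assumes "0 \<le> k"
  shows "utility (\<lambda>x. c + k * x)"
  unfolding utility_def
  by (intro conjI monoI continuous_intros) (simp add: assms mult_left_mono)

section \<open>Right limits of monotone functions\<close>

lemma tendsto_at_right_INF:
  fixes g :: "real \<Rightarrow> real"
  assumes "mono g" "bdd_below (range g)"
  shows "(g \<longlongrightarrow> (INF y\<in>{x<..}. g y)) (at_right x)"
proof -
  obtain K where "\<And>y. K \<le> g y" using assms(2) by (auto simp: bdd_below_def)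
  then show ?thesis
    using Lim_right_bound[where I=UNIV and f=g and x=x and K=K] assms(1) by (simp add: monoD)
qed

lemma continuous_at_right_iff_INF:
  fixes g :: "real \<Rightarrow> real"
  assumes "mono g" "bdd_below (range g)"
  shows "continuous (at_right x) g \<longleftrightarrow> (INF y\<in>{x<..}. g y) = g x"
proof -
  have lim: "(g \<longlongrightarrow> (INF y\<in>{x<..}. g y)) (at_right x)"
    by (rule tendsto_at_right_INF[OF assms])
  show ?thesis
    unfolding continuous_within
    using tendsto_unique[OF trivial_limit_at_right_real lim] lim by metis
qed

lemma INF_greaterThan_le:
  fixes g :: "real \<Rightarrow> real"
  shows "bdd_below (range g) \<Longrightarrow> x < y \<Longrightarrow> (INF z\<in>{x<..}. g z) \<le> g y"
  by (rule cINF_lower) (auto intro: bdd_below_mono[where B="range g"])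

lemma le_INF_greaterThan:
  fixes g :: "real \<Rightarrow> real"
  shows "(\<And>y. x < y \<Longrightarrow> c \<le> g y) \<Longrightarrow> c \<le> (INF y\<in>{x<..}. g y)"
  by (rule cINF_greatest) auto

lemma continuous_at_right_if_locally_const:
  fixes g :: "real \<Rightarrow> real"
  assumes "eventually (\<lambda>y. g y = g x) (at_right x)"
  shows "continuous (at_right x) g"
  unfolding continuous_within using assms by (rule tendsto_eventually)

lemma eventually_at_right_below:
  fixes x c :: real
  shows "x < c \<Longrightarrow> eventually (\<lambda>y. y < c) (at_right x)"
  by (rule order_tendstoD(2)[OF tendsto_ident_at])

section \<open>Compactly supported distribution functions\<close>

lemma MsetD:
  assumes "F \<in> Mset"
  shows "mono F" "\<And>x. continuous (at_right x) F"
    "\<exists>a b. \<forall>x. (x < a \<longrightarrow> F x = 0) \<and> (b \<le> x \<longrightarrow> F x = 1)"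
  using assms unfolding Mset_def by auto

lemma Mset_bounds:
  assumes "F \<in> Mset"
  shows "0 \<le> F x" "F x \<le> 1"
proof -
  obtain a b where ab: "\<And>x. (x < a \<longrightarrow> F x = 0) \<and> (b \<le> x \<longrightarrow> F x = 1)"
    using MsetD(3)[OF assms] by blast
  have "F (min x (a - 1)) \<le> F x" "F x \<le> F (max x b)"
    using MsetD(1)[OF assms] by (simp_all add: monoD)
  then show "0 \<le> F x" "F x \<le> 1"
    using ab[of "min x (a - 1)"] ab[of "max x b"] by simp_all
qed

definition dirac_cdf :: "real \<Rightarrow> real \<Rightarrow> real" where
  "dirac_cdf c x = (if c \<le> x then 1 else 0)"

definition two_point_cdf :: "real \<Rightarrow> real \<Rightarrow> real" where
  "two_point_cdf p x = (if x < 0 then 0 else if x < 1 then p else 1)"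

lemma dirac_cdf_Mset: "dirac_cdf c \<in> Mset"
  unfolding Mset_def
proof (intro CollectI conjI allI)
  show "mono (dirac_cdf c)" unfolding dirac_cdf_def by (rule monoI) auto
  fix x
  have "eventually (\<lambda>y. dirac_cdf c y = dirac_cdf c x) (at_right x)"
  proof (cases "x < c")
    case True
    show ?thesis
      using eventually_at_right_below[OF True] by eventually_elim (use True in \<open>simp add: dirac_cdf_def\<close>)
  next
    case False
    show ?thesis
      using eventually_at_right_less[of x] by eventually_elim (use False in \<open>simp add: dirac_cdf_def\<close>)
  qed
  then show "continuous (at_right x) (dirac_cdf c)" by (rule continuous_at_right_if_locally_const)
next
  show "\<exists>a b. \<forall>x. (x < a \<longrightarrow> dirac_cdf c x = 0) \<and> (b \<le> x \<longrightarrow> dirac_cdf c x = 1)"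
    by (intro exI[of _ c]) (simp add: dirac_cdf_def)
qed

lemma two_point_cdf_Mset:
  assumes "0 \<le> p" "p \<le> 1"
  shows "two_point_cdf p \<in> Mset"
  unfolding Mset_def
proof (intro CollectI conjI allI)
  show "mono (two_point_cdf p)" unfolding two_point_cdf_def using assms by (intro monoI) auto
  fix x
  have "eventually (\<lambda>y. two_point_cdf p y = two_point_cdf p x) (at_right x)"
  proof -
    consider "x < 0" | "0 \<le> x" "x < 1" | "1 \<le> x" by linarith
    then show ?thesis
    proof cases
      case 1
      show ?thesis
        using eventually_at_right_below[OF 1] by eventually_elim (use 1 in \<open>simp add: two_point_cdf_def\<close>)
    next
      case 2
      show ?thesis
        using eventually_conj[OF eventually_at_right_below[OF 2(2)] eventually_at_right_less[of x]]
        by eventually_elim (use 2 in \<open>simp add: two_point_cdf_def\<close>)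
    next
      case 3
      show ?thesis
        using eventually_at_right_less[of x] by eventually_elim (use 3 in \<open>simp add: two_point_cdf_def\<close>)
    qed
  qed
  then show "continuous (at_right x) (two_point_cdf p)" by (rule continuous_at_right_if_locally_const)
next
  show "\<exists>a b. \<forall>x. (x < a \<longrightarrow> two_point_cdf p x = 0) \<and> (b \<le> x \<longrightarrow> two_point_cdf p x = 1)"
    by (intro exI[of _ 0] exI[of _ 1]) (simp add: two_point_cdf_def)
qed

lemma dirac_cdf_inject:
  assumes "dirac_cdf a = dirac_cdf b"
  shows "a = b"
  using fun_cong[OF assms, of a] fun_cong[OF assms, of b]
  by (auto simp: dirac_cdf_def split: if_splits)

lemma st_le_dirac_cdf: "st_le (dirac_cdf a) (dirac_cdf b) \<longleftrightarrow> a \<le> b"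
  unfolding st_le_def dirac_cdf_def by (auto dest: spec[of _ b] split: if_splits)

lemma st_le_two_point_cdf: "p \<le> q \<Longrightarrow> st_le (two_point_cdf q) (two_point_cdf p)"
  unfolding st_le_def two_point_cdf_def by auto

lemma two_point_cdf_0: "two_point_cdf 0 = dirac_cdf 1"
  and two_point_cdf_1: "two_point_cdf 1 = dirac_cdf 0"
  by (auto simp: two_point_cdf_def dirac_cdf_def fun_eq_iff)

section \<open>The utility transform\<close>

lemma Tu_empty: "(\<And>x. y < w x) \<Longrightarrow> Tu w F y = 0"
  unfolding Tu_def by (auto simp: not_le[symmetric])

lemma Tu_univ:
  assumes "\<And>x. w x \<le> y"
  shows "Tu w F y = 1"
proof -
  have "{x. w x \<le> y} = UNIV" using assms by auto
  moreover have "\<not> bdd_above (UNIV :: real set)"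
    by (metis bdd_above.unfold gt_ex iso_tuple_UNIV_I linorder_not_less)
  ultimately show ?thesis unfolding Tu_def by simp
qed

lemma Tu_inner:
  assumes u: "utility w" and x1: "w x1 \<le> y" and x2: "y < w x2"
  defines "s \<equiv> Sup {x. w x \<le> y}"
  shows "w s = y" "\<And>x. w x \<le> y \<longleftrightarrow> x \<le> s" "\<And>F. Tu w F y = F s"
proof -
  have mo: "mono w" and co: "continuous_on UNIV w" using u by (auto simp: utility_def)
  let ?S = "{x. w x \<le> y}"
  have ne: "?S \<noteq> {}" using x1 by auto
  have bdd: "bdd_above ?S"
    using x2 mo by (intro bdd_aboveI[of _ x2]) (metis mem_Collect_eq monoD linorder_not_le order_le_less_trans less_le_not_le)
  have "closed ?S" using co by (intro closed_Collect_le) (auto intro: continuous_on_const)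
  then have sin: "w s \<le> y" unfolding s_def using closed_contains_Sup[OF ne bdd] by simp
  show iff: "w x \<le> y \<longleftrightarrow> x \<le> s" for x
    using bdd sin mo unfolding s_def by (auto intro: cSup_upper order_trans[OF monoD[OF mo]])
  show "w s = y"
  proof (rule ccontr)
    assume "w s \<noteq> y"
    then have lt: "w s < y" using sin by auto
    have "s \<le> x2" using iff x2 by (meson linorder_not_le order_less_imp_le)
    then obtain z where z: "s \<le> z" "w z = y"
      using IVT'[of w s y x2] lt x2 continuous_on_subset[OF co] by fastforce
    then show False using iff[of z] lt by auto
  qed
  show "Tu w F y = F s" for F unfolding Tu_def s_def using ne bdd by (simp only: if_False if_True)
qed

lemma Tu_cases:
  assumes "utility w"
  obtains (below) "\<And>x. y < w x" "\<And>F. Tu w F y = 0"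
  | (above) "\<And>x. w x \<le> y" "\<And>F. Tu w F y = 1"
  | (inner) s where "w s = y" "\<And>x. w x \<le> y \<longleftrightarrow> x \<le> s" "\<And>F. Tu w F y = F s"
proof -
  consider "\<forall>x. y < w x" | "\<forall>x. w x \<le> y" | x1 x2 where "w x1 \<le> y" "y < w x2"
    by (meson linorder_not_le)
  then show thesis
    by cases (use that Tu_empty Tu_univ Tu_inner[OF assms] in blast)+
qed

lemma Tu_bounds:
  assumes "\<And>x. 0 \<le> F x" "\<And>x. F x \<le> 1"
  shows "0 \<le> Tu w F y" "Tu w F y \<le> 1"
  unfolding Tu_def using assms by auto

lemma Tu_lower:
  assumes "utility w" "mono F" "\<And>x. F x \<le> 1" "w z \<le> y"
  shows "F z \<le> Tu w F y"
  using assms(1)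
proof (cases rule: Tu_cases[where y=y])
  case below then show ?thesis using assms(4) by (metis not_le)
next
  case above then show ?thesis using assms(3) by simp
next
  case (inner s) then show ?thesis using assms(2,4) by (simp add: monoD)
qed

lemma Tu_upper:
  assumes "utility w" "mono F" "\<And>x. 0 \<le> F x" "y < w z"
  shows "Tu w F y \<le> F z"
  using assms(1)
proof (cases rule: Tu_cases[where y=y])
  case below then show ?thesis using assms(3) by simp
next
  case above then show ?thesis using assms(4) by (metis not_le)
next
  case (inner s)
  then have "s \<le> z" using assms(4) by (metis linorder_le_cases not_le)
  then show ?thesis using inner(3) assms(2) by (simp add: monoD)
qed

lemma Tu_const: "Tu (\<lambda>_. c) F = dirac_cdf c"
  by (rule ext) (auto simp: dirac_cdf_def intro: Tu_empty Tu_univ)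

lemma Tu_dirac_cdf:
  assumes "utility w"
  shows "Tu w (dirac_cdf c) = dirac_cdf (w c)"
proof
  fix y
  show "Tu w (dirac_cdf c) y = dirac_cdf (w c) y"
    using assms by (cases rule: Tu_cases[where y=y]) (auto simp: dirac_cdf_def not_le)
qed

lemma Tu_comp:
  assumes "utility a"
  shows "Tu a (Tu b F) = Tu (a \<circ> b) F"
proof
  fix y
  show "Tu a (Tu b F) y = Tu (a \<circ> b) F y"
    using assms
  proof (cases rule: Tu_cases[where y=y])
    case below then show ?thesis by (simp add: Tu_empty)
  next
    case above then show ?thesis by (simp add: Tu_univ)
  next
    case (inner s)
    then have "{x. (a \<circ> b) x \<le> y} = {x. b x \<le> s}" by auto
    then have "Tu (a \<circ> b) F y = Tu b F s" by (simp only: Tu_def)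
    then show ?thesis using inner(3) by simp
  qed
qed

lemma Tu_ident: "Tu (\<lambda>x. x) F = F"
proof
  fix y
  show "Tu (\<lambda>x. x) F y = F y"
    using utility_ident
  proof (cases rule: Tu_cases[where y=y])
    case below then show ?thesis using below(1)[of y] by simp
  next
    case above then show ?thesis using above(1)[of "y + 1"] by simp
  next
    case (inner s) then show ?thesis by simp
  qed
qed

lemma st_le_Tu: "st_le F G \<Longrightarrow> st_le (Tu w F) (Tu w G)"
  unfolding st_le_def Tu_def by auto

lemma mono_Tu:
  assumes "utility w" "mono F" "\<And>x. 0 \<le> F x" "\<And>x. F x \<le> 1"
  shows "mono (Tu w F)"
proof
  fix y1 y2 :: real assume "y1 \<le> y2"
  show "Tu w F y1 \<le> Tu w F y2"
    using assms(1)
  proof (cases rule: Tu_cases[where y=y1])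
    case below then show ?thesis using Tu_bounds[OF assms(3,4)] by simp
  next
    case above
    have "Tu w F y2 = 1" by (rule Tu_univ) (use above(1) \<open>y1 \<le> y2\<close> in \<open>meson order_trans\<close>)
    then show ?thesis using above(2) by simp
  next
    case (inner s) then show ?thesis using Tu_lower[OF assms(1,2,4)] \<open>y1 \<le> y2\<close> by simp
  qed
qed

lemma INF_greaterThan_Tu_le:
  assumes u: "utility w" and mo: "mono H" and b0: "\<And>x. 0 \<le> H x" and b1: "\<And>x. H x \<le> 1"
    and zero_below: "\<And>x. x < a \<Longrightarrow> H x = 0"
  shows "(INF y'\<in>{y<..}. Tu w H y') \<le> Tu w (\<lambda>x. INF z\<in>{x<..}. H z) y"
proof -
  have bdd: "bdd_below (range (Tu w H))"
    using Tu_bounds(1)[where F=H, OF b0 b1] by (auto intro: bdd_belowI2[where m=0])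
  have INF_le: "(INF y'\<in>{y<..}. Tu w H y') \<le> H z" if "y < w z" for z
  proof -
    define y' where "y' = (y + w z) / 2"
    have y': "y < y'" "y' < w z" using that by (simp_all add: y'_def)
    have "(INF y'\<in>{y<..}. Tu w H y') \<le> Tu w H y'" using INF_greaterThan_le[OF bdd y'(1)] .
    also have "\<dots> \<le> H z" using Tu_upper[OF u mo b0 y'(2)] .
    finally show ?thesis .
  qed
  from u show ?thesis
  proof (cases rule: Tu_cases[where y=y])
    case below
    then show ?thesis using INF_le[of "a - 1"] zero_below[of "a - 1"] by simp
  next
    case above
    have "(INF y'\<in>{y<..}. Tu w H y') \<le> Tu w H (y + 1)" using INF_greaterThan_le[OF bdd] by simp
    also have "\<dots> \<le> 1" by (rule Tu_bounds(2)[where F=H, OF b0 b1])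
    finally show ?thesis using above(2) by simp
  next
    case (inner s)
    show ?thesis
      unfolding inner(3)
    proof (rule le_INF_greaterThan)
      fix z assume "s < z"
      then show "(INF y'\<in>{y<..}. Tu w H y') \<le> H z" using inner(2)[of z] INF_le by simp
    qed
  qed
qed

lemma Tu_INF_greaterThan_le:
  assumes u: "utility w" and b0: "\<And>x. 0 \<le> H x" and b1: "\<And>x. H x \<le> 1"
  shows "Tu w (\<lambda>x. INF z\<in>{x<..}. H z) y \<le> (INF y'\<in>{y<..}. Tu w H y')"
proof (rule le_INF_greaterThan)
  have bdd: "bdd_below (range H)" using b0 by (auto intro: bdd_belowI2[where m=0])
  fix y' assume "y < y'"
  from u show "Tu w (\<lambda>x. INF z\<in>{x<..}. H z) y \<le> Tu w H y'"
  proof (cases rule: Tu_cases[where y=y])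
    case below
    then show ?thesis using Tu_bounds(1)[where F=H, OF b0 b1] by simp
  next
    case above
    have "Tu w H y' = 1" by (rule Tu_univ) (use above(1) \<open>y < y'\<close> in \<open>meson less_imp_le order_trans\<close>)
    then show ?thesis using above(2) by simp
  next
    case (inner s)
    note s = inner
    from u show ?thesis
    proof (cases rule: Tu_cases[where y=y'])
      case below
      then show ?thesis using below(1)[of s] s(1) \<open>y < y'\<close> by simp
    next
      case above
      then show ?thesis using s(3) INF_greaterThan_le[OF bdd, of s "s + 1"] b1[of "s + 1"] by simp
    next
      case (inner s')
      then have "s < s'" using s(2)[of s'] \<open>y < y'\<close> by simp
      then show ?thesis using s(3) inner(3) INF_greaterThan_le[OF bdd] by simp
    qed
  qed
qed

lemma INF_greaterThan_Tu:
  assumes "utility w" "mono H" "\<And>x. 0 \<le> H x" "\<And>x. H x \<le> 1" "\<And>x. x < a \<Longrightarrow> H x = 0"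
  shows "(INF y'\<in>{y<..}. Tu w H y') = Tu w (\<lambda>x. INF z\<in>{x<..}. H z) y"
  using INF_greaterThan_Tu_le[OF assms] Tu_INF_greaterThan_le[OF assms(1,3,4)] by (rule antisym)

lemma Tu_Mset:
  assumes F: "F \<in> Mset" and u: "utility w"
  shows "Tu w F \<in> Mset"
proof -
  obtain a b where ab: "\<And>x. x < a \<Longrightarrow> F x = 0" "\<And>x. b \<le> x \<Longrightarrow> F x = 1"
    using MsetD(3)[OF F] by blast
  have b0: "\<And>x. 0 \<le> F x" and b1: "\<And>x. F x \<le> 1" using Mset_bounds[OF F] by auto
  have mo: "mono (Tu w F)" using mono_Tu[OF u MsetD(1)[OF F] b0 b1] .
  have bdd: "bdd_below (range (Tu w F))" and bddF: "bdd_below (range F)"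
    using Tu_bounds(1)[where F=F, OF b0 b1] b0 by (auto intro: bdd_belowI2[where m=0])
  have F_INF: "(\<lambda>x. INF z\<in>{x<..}. F z) = F"
    using continuous_at_right_iff_INF[OF MsetD(1)[OF F] bddF] MsetD(2)[OF F] by auto
  have "continuous (at_right y) (Tu w F)" for y
    using INF_greaterThan_Tu[where a=a and y=y, OF u MsetD(1)[OF F] b0 b1 ab(1)]
    unfolding F_INF continuous_at_right_iff_INF[OF mo bdd] .
  moreover have "Tu w F y = 0" if "y < w a" for y
    using u
  proof (cases rule: Tu_cases[where y=y])
    case above then show ?thesis using above(1)[of a] that by simp
  next
    case (inner s)
    then have "s < a" using that by (metis linorder_not_le)
    then show ?thesis using inner(3) ab(1) by simp
  qed (simp add: Tu_empty)
  moreover have "Tu w F y = 1" if "w b \<le> y" for y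
    using Tu_lower[OF u MsetD(1)[OF F] b1 that] ab(2)[of b] Tu_bounds(2)[where F=F and w=w and y=y, OF b0 b1] by simp
  ultimately show ?thesis
    unfolding Mset_def using mo by blast
qed

section \<open>The distortion transform\<close>

lemma distortion_comp_Mset:
  assumes d: "distortion d" and F: "F \<in> Mset"
  shows "mono (\<lambda>x. d (F x))" "\<And>x. 0 \<le> d (F x)" "\<And>x. d (F x) \<le> 1"
proof -
  have b: "\<And>x. F x \<in> {0..1}" using Mset_bounds[OF F] by auto
  have mo: "mono_on {0..1} d" and r: "d ` {0..1} \<subseteq> {0..1}" using d unfolding distortion_def by auto
  show "mono (\<lambda>x. d (F x))"
    by (rule monoI) (use b MsetD(1)[OF F] in \<open>auto intro: mono_onD[OF mo] simp: monoD\<close>)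
  show "\<And>x. 0 \<le> d (F x)" "\<And>x. d (F x) \<le> 1" using r b by (auto simp: image_subset_iff)
qed

lemma Td_eq_INF:
  assumes "distortion d" "F \<in> Mset"
  shows "Td d F x = (INF y\<in>{x<..}. d (F y))"
proof -
  note dF = distortion_comp_Mset[OF assms]
  have "bdd_below (range (\<lambda>y. d (F y)))" using dF(2) by (rule bdd_belowI2)
  then show ?thesis
    unfolding Td_def
    by (intro tendsto_Lim[OF trivial_limit_at_right_real] tendsto_at_right_INF dF(1))
qed

lemma Td_Tu_commute:
  assumes d: "distortion d" and G: "G \<in> Mset" and u: "utility w"
  shows "Td d (Tu w G) = Tu w (Td d G)"
proof
  fix y
  have d01: "d 0 = 0" "d 1 = 1" using d unfolding distortion_def by auto
  obtain a where a: "\<And>x. x < a \<Longrightarrow> G x = 0" using MsetD(3)[OF G] by blast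
  note dG = distortion_comp_Mset[OF d G]
  have dTu: "(\<lambda>y'. d (Tu w G y')) = Tu w (\<lambda>x. d (G x))" using d01 by (auto simp: Tu_def)
  have TdG: "(\<lambda>x. INF z\<in>{x<..}. d (G z)) = Td d G" by (rule ext) (rule Td_eq_INF[OF d G, symmetric])
  have "Td d (Tu w G) y = (INF y'\<in>{y<..}. d (Tu w G y'))" by (rule Td_eq_INF[OF d Tu_Mset[OF G u]])
  also have "\<dots> = (INF y'\<in>{y<..}. Tu w (\<lambda>x. d (G x)) y')" by (simp only: dTu)
  also have "\<dots> = Tu w (\<lambda>x. INF z\<in>{x<..}. d (G z)) y"
    by (rule INF_greaterThan_Tu[OF u dG, where a=a]) (simp add: a d01)
  also have "\<dots> = Tu w (Td d G) y" by (simp only: TdG)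
  finally show "Td d (Tu w G) y = Tu w (Td d G) y" .
qed

lemma eq_Td_if_sandwiched:
  assumes d: "distortion d" and F: "F \<in> Mset" and G: "G \<in> Mset"
    and lower: "\<And>x. d (F x) \<le> G x" and upper: "\<And>x y. x < y \<Longrightarrow> G x \<le> d (F y)"
  shows "G = Td d F"
proof
  fix x
  have bddG: "bdd_below (range G)" and bddF: "bdd_below (range (\<lambda>y. d (F y)))"
    using Mset_bounds(1)[OF G] distortion_comp_Mset(2)[OF d F] by (auto intro: bdd_belowI2[where m=0])
  have "(INF y\<in>{x<..}. d (F y)) \<le> (INF y\<in>{x<..}. G y)"
    using lower by (intro cINF_mono bdd_below_mono[OF bddF]) auto
  also have "\<dots> = G x"
    using continuous_at_right_iff_INF[OF MsetD(1)[OF G] bddG] MsetD(2)[OF G] by blast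
  finally have "(INF y\<in>{x<..}. d (F y)) \<le> G x" .
  moreover have "G x \<le> (INF y\<in>{x<..}. d (F y))" using upper by (rule le_INF_greaterThan)
  ultimately show "G x = Td d F x" using Td_eq_INF[OF d F] by simp
qed

section \<open>Operators fixing point masses and commuting with all utility transforms\<close>

definition ramp :: "real \<Rightarrow> real \<Rightarrow> real \<Rightarrow> real" where
  "ramp x y t = max 0 (min 1 ((t - x) / (y - x)))"

lemma utility_ramp:
  assumes "x < y"
  shows "utility (ramp x y)"
  unfolding utility_def ramp_def
proof
  show "mono (\<lambda>t. max 0 (min 1 ((t - x) / (y - x))))"
  proof (rule monoI)
    fix s t :: real assume "s \<le> t"
    then have "(s - x) / (y - x) \<le> (t - x) / (y - x)" using assms by (simp add: divide_right_mono)
    then show "max 0 (min 1 ((s - x) / (y - x))) \<le> max 0 (min 1 ((t - x) / (y - x)))"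
      by (intro max.mono min.mono order_refl)
  qed
  show "continuous_on UNIV (\<lambda>t. max 0 (min 1 ((t - x) / (y - x))))"
    by (intro continuous_intros) (use assms in auto)
qed

lemma Tu_ramp_zero:
  assumes "x < y"
  shows "Tu (ramp x y) G 0 = G x"
  using utility_ramp[OF assms]
proof (cases rule: Tu_cases[where y=0])
  case below then show ?thesis using below(1)[of x] by (simp add: ramp_def)
next
  case above then show ?thesis using above(1)[of y] assms by (simp add: ramp_def)
next
  case (inner s)
  have "x \<le> s" using inner(2)[of x] by (simp add: ramp_def)
  moreover have "\<not> x < s"
  proof
    assume "x < s"
    then have "0 < (s - x) / (y - x)" using assms by simp
    then show False using inner(1) by (simp add: ramp_def)
  qed
  ultimately show ?thesis using inner(3) by simp
qed

lemma Tu_ramp_between_two_points: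
  assumes xy: "x < y" and F: "F \<in> Mset"
  shows "st_le (Tu (ramp x y) F) (two_point_cdf (F x))"
    and "st_le (two_point_cdf (F y)) (Tu (ramp x y) F)"
proof -
  have u: "utility (ramp x y)" by (rule utility_ramp[OF xy])
  have r01: "0 \<le> ramp x y t" "ramp x y t \<le> 1" for t by (auto simp: ramp_def)
  have "two_point_cdf (F x) t \<le> Tu (ramp x y) F t \<and> Tu (ramp x y) F t \<le> two_point_cdf (F y) t" for t
  proof -
    consider "t < 0" | "0 \<le> t" "t < 1" | "1 \<le> t" by linarith
    then show ?thesis
    proof cases
      case 1
      then have "Tu (ramp x y) F t = 0" by (intro Tu_empty less_le_trans[OF 1 r01(1)])
      then show ?thesis using 1 by (simp add: two_point_cdf_def)
    next
      case 2
      have "F x \<le> Tu (ramp x y) F t"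
        using 2 by (intro Tu_lower[OF u MsetD(1)[OF F] Mset_bounds(2)[OF F]]) (simp add: ramp_def)
      moreover have "Tu (ramp x y) F t \<le> F y"
        using 2 xy by (intro Tu_upper[OF u MsetD(1)[OF F] Mset_bounds(1)[OF F]]) (simp add: ramp_def)
      ultimately show ?thesis using 2 by (simp add: two_point_cdf_def)
    next
      case 3
      then have "Tu (ramp x y) F t = 1" by (intro Tu_univ order_trans[OF r01(2) 3])
      then show ?thesis using 3 by (simp add: two_point_cdf_def)
    qed
  qed
  then show "st_le (Tu (ramp x y) F) (two_point_cdf (F x))"
    and "st_le (two_point_cdf (F y)) (Tu (ramp x y) F)"
    unfolding st_le_def by auto
qed

lemma distortion_two_point_cdf:
  assumes TM: "T ` Mset \<subseteq> Mset" and mon: "monotone_op T"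
    and fix_dirac: "\<And>a. T (dirac_cdf a) = dirac_cdf a"
  shows "distortion (\<lambda>p. T (two_point_cdf p) 0)"
  unfolding distortion_def
proof (intro conjI)
  show "mono_on {0..1} (\<lambda>p. T (two_point_cdf p) 0)"
  proof (rule mono_onI)
    fix p q :: real assume "p \<in> {0..1}" "q \<in> {0..1}" "p \<le> q"
    then have "st_le (T (two_point_cdf q)) (T (two_point_cdf p))"
      using mon unfolding monotone_op_def by (simp add: two_point_cdf_Mset st_le_two_point_cdf)
    then show "T (two_point_cdf p) 0 \<le> T (two_point_cdf q) 0" unfolding st_le_def by blast
  qed
  show "(\<lambda>p. T (two_point_cdf p) 0) ` {0..1} \<subseteq> {0..1}"
  proof (rule image_subsetI)
    fix p :: real assume "p \<in> {0..1}"
    then have "T (two_point_cdf p) \<in> Mset" using TM two_point_cdf_Mset by auto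
    then show "T (two_point_cdf p) 0 \<in> {0..1}" using Mset_bounds by auto
  qed
qed (simp_all add: two_point_cdf_0 two_point_cdf_1 fix_dirac dirac_cdf_def)

lemma two_point_cdf_bounds:
  assumes mon: "monotone_op T"
    and F: "F \<in> Mset" and xy: "x < y"
    and comm: "T (Tu (ramp x y) F) = Tu (ramp x y) (T F)"
  shows "T (two_point_cdf (F x)) 0 \<le> T F x" "T F x \<le> T (two_point_cdf (F y)) 0"
proof -
  have rF: "Tu (ramp x y) F \<in> Mset" by (rule Tu_Mset[OF F utility_ramp[OF xy]])
  have at_zero: "T (Tu (ramp x y) F) 0 = T F x"
    using comm Tu_ramp_zero[OF xy] by simp
  have "st_le (T (Tu (ramp x y) F)) (T (two_point_cdf (F x)))"
    "st_le (T (two_point_cdf (F y))) (T (Tu (ramp x y) F))"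
    using mon Tu_ramp_between_two_points[OF xy F] rF two_point_cdf_Mset Mset_bounds[OF F]
    unfolding monotone_op_def by simp_all
  then show "T (two_point_cdf (F x)) 0 \<le> T F x" "T F x \<le> T (two_point_cdf (F y)) 0"
    unfolding st_le_def at_zero[symmetric] by simp_all
qed

lemma eq_Td_if_commutes_with_Tu:
  assumes TM: "T ` Mset \<subseteq> Mset" and mon: "monotone_op T"
    and fix_dirac: "\<And>a. T (dirac_cdf a) = dirac_cdf a"
    and comm: "\<And>v F. utility v \<Longrightarrow> F \<in> Mset \<Longrightarrow> T (Tu v F) = Tu v (T F)"
    and F: "F \<in> Mset"
  shows "T F = Td (\<lambda>p. T (two_point_cdf p) 0) F"
proof (rule eq_Td_if_sandwiched[OF distortion_two_point_cdf[OF TM mon fix_dirac] F])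
  show "T F \<in> Mset" using TM F by blast
  note bounds = two_point_cdf_bounds[OF mon F _ comm[OF utility_ramp F]]
  show "T (two_point_cdf (F x)) 0 \<le> T F x" for x using bounds(1)[of x "x + 1"] by simp
  show "T F x \<le> T (two_point_cdf (F y)) 0" if "x < y" for x y using bounds(2)[OF that that] .
qed

lemma commutes_with_U_if_Td_Tu:
  assumes d: "distortion d" and sm: "strict_mono u" and su: "surj u"
    and TF: "\<forall>F\<in>Mset. T F = Td d (Tu u F)"
  shows "commutes_with_U T"
proof -
  have u: "utility u" and p: "utility (inv u)"
    using utility_strict_mono_surj sm su strict_mono_surj_inv[OF sm su] by blast+
  have inj: "inj u" using strict_mono_on_imp_inj_on[OF sm] by simp
  have conj: "T (Tu (inv u \<circ> w \<circ> u) F) = Tu w (T F)" if w: "utility w" and F: "F \<in> Mset" for w F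
  proof -
    have v: "utility (inv u \<circ> w \<circ> u)" using p w u by (intro utility_comp)
    have "T (Tu (inv u \<circ> w \<circ> u) F) = Td d (Tu u (Tu (inv u \<circ> w \<circ> u) F))"
      using TF Tu_Mset[OF F v] by blast
    also have "\<dots> = Td d (Tu w (Tu u F))"
      using Tu_comp[OF u] Tu_comp[OF w] by (simp add: comp_def surj_f_inv_f[OF su])
    also have "\<dots> = Tu w (Td d (Tu u F))" by (rule Td_Tu_commute[OF d Tu_Mset[OF F u] w])
    also have "\<dots> = Tu w (T F)" using TF F by simp
    finally show ?thesis .
  qed
  show ?thesis
    unfolding commutes_with_U_def
  proof (intro conjI allI impI)
    fix w assume "utility w"
    then show "\<exists>v. utility v \<and> (\<forall>F\<in>Mset. Tu w (T F) = T (Tu v F))"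
      using conj p u by (intro exI[of _ "inv u \<circ> w \<circ> u"]) (simp add: utility_comp)
  next
    fix v assume v: "utility v"
    have "inv u \<circ> (u \<circ> v \<circ> inv u) \<circ> u = v" by (simp add: fun_eq_iff inv_f_f[OF inj])
    then show "\<exists>w. utility w \<and> (\<forall>F\<in>Mset. T (Tu v F) = Tu w (T F))"
      using conj[of "u \<circ> v \<circ> inv u"] p u v by (intro exI[of _ "u \<circ> v \<circ> inv u"]) (simp add: utility_comp)
  qed
qed

lemma dirac_cdf_image_if_commutes_with_U:
  assumes C: "commutes_with_U T"
  obtains phi where "surj phi" "\<And>a. T (dirac_cdf a) = dirac_cdf (phi a)"
proof -
  have onto: "\<exists>a. T (dirac_cdf a) = dirac_cdf c" for c
  proof -
    obtain v where v: "utility v" "\<forall>F\<in>Mset. Tu (\<lambda>_. c) (T F) = T (Tu v F)"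
      using C utility_const unfolding commutes_with_U_def by blast
    have "dirac_cdf c = T (Tu v (dirac_cdf 0))" using v(2) dirac_cdf_Mset Tu_const by metis
    then show ?thesis using Tu_dirac_cdf[OF v(1)] by metis
  qed
  have into: "\<exists>c. T (dirac_cdf a) = dirac_cdf c" for a
  proof -
    obtain u where u: "utility u" "\<forall>F\<in>Mset. T (Tu (\<lambda>_. a) F) = Tu u (T F)"
      using C utility_const unfolding commutes_with_U_def by blast
    obtain b where b: "T (dirac_cdf b) = dirac_cdf 0" using onto by blast
    have "T (dirac_cdf a) = Tu u (T (dirac_cdf b))" using u(2) dirac_cdf_Mset Tu_const by metis
    then show ?thesis using b Tu_dirac_cdf[OF u(1)] by metis
  qed
  obtain phi where phi: "\<And>a. T (dirac_cdf a) = dirac_cdf (phi a)"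
    using into by (metis choice)
  have "surj phi"
    unfolding surj_def
  proof
    fix c
    obtain a where "T (dirac_cdf a) = dirac_cdf c" using onto by blast
    then have "c = phi a" using phi dirac_cdf_inject by metis
    then show "\<exists>a. c = phi a" ..
  qed
  then show thesis using that phi by blast
qed

lemma intertwining_if_commutes_with_U:
  assumes C: "commutes_with_U T" and phi: "\<And>a. T (dirac_cdf a) = dirac_cdf (phi a)"
    and v: "utility v"
  obtains u where "utility u" "\<forall>F\<in>Mset. T (Tu v F) = Tu u (T F)" "phi \<circ> v = u \<circ> phi"
proof -
  obtain u where u: "utility u" "\<forall>F\<in>Mset. T (Tu v F) = Tu u (T F)"
    using C v unfolding commutes_with_U_def by blast
  have "dirac_cdf (phi (v x)) = dirac_cdf (u (phi x))" for x
    using u(2) dirac_cdf_Mset phi Tu_dirac_cdf[OF v] Tu_dirac_cdf[OF u(1)] by metis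
  then have "phi \<circ> v = u \<circ> phi" using dirac_cdf_inject by (simp add: fun_eq_iff)
  then show thesis using that u by blast
qed

lemma strict_mono_if_intertwining:
  fixes phi :: "real \<Rightarrow> real"
  assumes mo: "mono phi" and su: "surj phi"
    and intertw: "\<And>v. utility v \<Longrightarrow> \<exists>u. phi \<circ> v = u \<circ> phi"
  shows "strict_mono phi"
proof (rule strict_monoI)
  fix a b :: real assume ab: "a < b"
  have "phi a \<noteq> phi b"
  proof
    assume eq: "phi a = phi b"
    obtain z where z: "phi z = phi a + 1" using su by (metis surjD)
    have "a < z"
    proof (rule ccontr)
      assume "\<not> a < z"
      then have "phi z \<le> phi a" using mo by (simp add: monoD)
      then show False using z by simp
    qed
    define k where "k = (z - a) / (b - a)"
    define v where "v x = (a - k * a) + k * x" for x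
    have "utility v" unfolding v_def k_def using ab \<open>a < z\<close> by (intro utility_affine) simp
    then obtain u where u: "phi \<circ> v = u \<circ> phi" using intertw by blast
    have "k * (b - a) = z - a" using ab by (simp add: k_def)
    then have "v a = a" "v b = z" unfolding v_def by (simp_all add: algebra_simps)
    then have "phi a = u (phi a)" "phi z = u (phi b)"
      using fun_cong[OF u, of a] fun_cong[OF u, of b] by simp_all
    then show False using eq z by simp
  qed
  then show "phi a < phi b" using mo ab by (simp add: monoD order_less_le)
qed

lemma commutes_with_Tu_normalised:
  assumes C: "commutes_with_U T" and phi: "\<And>a. T (dirac_cdf a) = dirac_cdf (phi a)"
    and sm: "strict_mono phi" and su: "surj phi" and v: "utility v" and F: "F \<in> Mset"
  shows "T (Tu (inv phi) (Tu v F)) = Tu v (T (Tu (inv phi) F))"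
proof -
  have p: "utility (inv phi)" and phiu: "utility phi"
    using utility_strict_mono_surj sm su strict_mono_surj_inv[OF sm su] by blast+
  define w where "w = inv phi \<circ> v \<circ> phi"
  have w: "utility w" unfolding w_def using p v phiu by (intro utility_comp)
  obtain u where u: "utility u" "\<forall>G\<in>Mset. T (Tu w G) = Tu u (T G)" "phi \<circ> w = u \<circ> phi"
    using intertwining_if_commutes_with_U[OF C phi w] by blast
  have "v \<circ> phi = u \<circ> phi" using u(3) by (simp add: w_def fun_eq_iff surj_f_inv_f[OF su])
  have "u = v"
  proof
    fix y
    show "u y = v y"
      using fun_cong[OF \<open>v \<circ> phi = u \<circ> phi\<close>, of "inv phi y"] by (simp add: surj_f_inv_f[OF su])
  qed
  have pv: "inv phi \<circ> v = w \<circ> inv phi" by (simp add: w_def fun_eq_iff surj_f_inv_f[OF su])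
  have "T (Tu (inv phi) (Tu v F)) = T (Tu w (Tu (inv phi) F))"
    using Tu_comp[OF p] Tu_comp[OF w] pv by simp
  also have "\<dots> = Tu v (T (Tu (inv phi) F))" using u(2) Tu_Mset[OF F p] \<open>u = v\<close> by blast
  finally show ?thesis .
qed

lemma Td_Tu_if_commutes_with_U:
  assumes TM: "T ` Mset \<subseteq> Mset" and mon: "monotone_op T" and C: "commutes_with_U T"
  shows "\<exists>d u. distortion d \<and> utility u \<and> strict_mono u \<and> surj u \<and>
                (\<forall>F\<in>Mset. T F = Td d (Tu u F))"
proof -
  obtain phi where su: "surj phi" and phi: "\<And>a. T (dirac_cdf a) = dirac_cdf (phi a)"
    using dirac_cdf_image_if_commutes_with_U[OF C] by blast
  have "mono phi"
  proof
    fix a b :: real assume "a \<le> b"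
    then have "st_le (T (dirac_cdf a)) (T (dirac_cdf b))"
      using mon dirac_cdf_Mset unfolding monotone_op_def by (simp add: st_le_dirac_cdf)
    then show "phi a \<le> phi b" by (simp add: phi st_le_dirac_cdf)
  qed
  have sm: "strict_mono phi"
    by (rule strict_mono_if_intertwining[OF \<open>mono phi\<close> su])
      (metis intertwining_if_commutes_with_U[OF C phi])
  have p: "utility (inv phi)" and "utility phi"
    using utility_strict_mono_surj strict_mono_surj_inv[OF sm su] sm su by blast+
  define T' where "T' F = T (Tu (inv phi) F)" for F
  have "T' ` Mset \<subseteq> Mset" using TM Tu_Mset[OF _ p] unfolding T'_def by blast
  moreover have "monotone_op T'"
    using mon Tu_Mset[OF _ p] st_le_Tu unfolding monotone_op_def T'_def by blast
  moreover have "T' (dirac_cdf a) = dirac_cdf a" for a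
    unfolding T'_def by (simp add: Tu_dirac_cdf[OF p] phi surj_f_inv_f[OF su])
  moreover have "T' (Tu v F) = Tu v (T' F)" if "utility v" "F \<in> Mset" for v F
    unfolding T'_def using commutes_with_Tu_normalised[OF C phi sm su that] .
  ultimately have d: "distortion (\<lambda>p. T' (two_point_cdf p) 0)"
    and T'_Td: "\<And>F. F \<in> Mset \<Longrightarrow> T' F = Td (\<lambda>p. T' (two_point_cdf p) 0) F"
    using distortion_two_point_cdf eq_Td_if_commutes_with_Tu by blast+
  have "T F = T' (Tu phi F)" for F
  proof -
    have "inv phi \<circ> phi = (\<lambda>x. x)"
      using strict_mono_on_imp_inj_on[OF sm] by (simp add: fun_eq_iff)
    then show ?thesis unfolding T'_def using Tu_comp[OF p] by (simp add: Tu_ident)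
  qed
  then have "\<forall>F\<in>Mset. T F = Td (\<lambda>p. T' (two_point_cdf p) 0) (Tu phi F)"
    using T'_Td Tu_Mset[OF _ \<open>utility phi\<close>] by simp
  then show ?thesis using d \<open>utility phi\<close> sm su by blast
qed

theorem theorem3:
  fixes T :: "(real \<Rightarrow> real) \<Rightarrow> (real \<Rightarrow> real)"
  assumes "T ` Mset \<subseteq> Mset"
    and "monotone_op T"
  shows "commutes_with_U T \<longleftrightarrow>
         (\<exists>d u. distortion d \<and> utility u \<and> strict_mono u \<and> surj u \<and>
                (\<forall>F\<in>Mset. T F = Td d (Tu u F)))"
  using Td_Tu_if_commutes_with_U[OF assms] commutes_with_U_if_Td_Tu by blast

end
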